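(* Let $G$ be a finite undirected graph, $\tau\ge1$ an integer, $v\in V(G)$, and $e=(u,v)\in E(G)$. Then $\phi_\tau(e,G)\ge|V(\Omega(v))|$.
   Context: Graphs are finite, simple, undirected and unweighted; paths may repeat vertices and their length is the number of edges. For vertices $v,u$ of a graph $H$, $u$ is $\tau$-hop reachable from $v$ in $H$ (written $u\rightarrow_\tau v$) if there is a path between them in $H$ of length at most $\tau$. $N_\tau(v,H)$ is the set of vertices $u\ne v$ that are $\tau$-hop reachable from $v$ in $H$. For an edge $e=(u,v)$ of $H$, $\Delta_\tau(e,H)=N_\tau(u,H)\cap N_\tau(v,H)$ and $\mathrm{sup}_\tau(e,H)=|\Delta_\tau(e,H)|$. The $(k,\tau)$-truss of $G$ is the maximal subgraph $G'$ of $G$ such that $\mathrm{sup}_\tau(e,G')\ge k-2$ for every $e\in E(G')$ (supports computed inside $G'$) and no more edges of $G$ can be added while keeping this property. The higher-order truss number $\phi_\tau(e,G)$ is the maximum $k$ such that $e$ belongs to the $(k,\tau)$-truss of $G$. The vertex centric $\tau$-diameter subgraph $\Omega(v)$ of $v$ is the subgraph of $G$ induced by $\{v\}\cup\{w : w\rightarrow_{\lfloor\tau/2\rfloor} v \text{ in } G\}$. *)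

theory Defs
  imports Main
begin

type_synonym 'a graph = "'a set \<times> 'a set set"

definition verts :: "'a graph \<Rightarrow> 'a set" where "verts G = fst G"
definition edges :: "'a graph \<Rightarrow> 'a set set" where "edges G = snd G"

definition wf_graph :: "'a graph \<Rightarrow> bool" where
  "wf_graph G \<longleftrightarrow> finite (verts G) \<and>
     (\<forall>e\<in>edges G. \<exists>x y. x \<noteq> y \<and> e = {x, y} \<and> x \<in> verts G \<and> y \<in> verts G)"

definition adjrel :: "'a set set \<Rightarrow> ('a \<times> 'a) set" where
  "adjrel E = {(x, y). {x, y} \<in> E}"

definition hop_reach :: "'a graph \<Rightarrow> nat \<Rightarrow> 'a \<Rightarrow> 'a \<Rightarrow> bool" where
  "hop_reach H \<tau> u w \<longleftrightarrow> (\<exists>m\<le>\<tau>. (u, w) \<in> (adjrel (edges H)) ^^ m)"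

definition N_tau :: "'a graph \<Rightarrow> nat \<Rightarrow> 'a \<Rightarrow> 'a set" where
  "N_tau H \<tau> v = {u \<in> verts H. u \<noteq> v \<and> hop_reach H \<tau> u v}"

definition sup_tau :: "'a graph \<Rightarrow> nat \<Rightarrow> 'a \<Rightarrow> 'a \<Rightarrow> nat" where
  "sup_tau H \<tau> u v = card (N_tau H \<tau> u \<inter> N_tau H \<tau> v)"

text \<open>A subgraph is given by a set F of edges of G (isolated vertices do not
  affect supports). Property: every edge has support at least k - 2 inside it
  (written as sup + 2 \<ge> k to avoid natural-number truncation).\<close>
definition truss_prop :: "'a graph \<Rightarrow> nat \<Rightarrow> nat \<Rightarrow> 'a set set \<Rightarrow> bool" where
  "truss_prop G \<tau> k F \<longleftrightarrow> F \<subseteq> edges G \<and>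
     (\<forall>x y. {x, y} \<in> F \<longrightarrow> sup_tau (verts G, F) \<tau> x y + 2 \<ge> k)"

definition is_truss :: "'a graph \<Rightarrow> nat \<Rightarrow> nat \<Rightarrow> 'a set set \<Rightarrow> bool" where
  "is_truss G \<tau> k F \<longleftrightarrow> truss_prop G \<tau> k F \<and>
     (\<forall>F'. truss_prop G \<tau> k F' \<and> F \<subseteq> F' \<longrightarrow> F' = F)"

definition truss :: "'a graph \<Rightarrow> nat \<Rightarrow> nat \<Rightarrow> 'a set set" where
  "truss G \<tau> k = (THE F. is_truss G \<tau> k F)"

definition phi_tau :: "'a graph \<Rightarrow> nat \<Rightarrow> 'a set \<Rightarrow> nat" where
  "phi_tau G \<tau> e = Max {k. e \<in> truss G \<tau> k}"

definition Omega :: "'a graph \<Rightarrow> nat \<Rightarrow> 'a \<Rightarrow> 'a graph" where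
  "Omega G \<tau> v = (let S = {v} \<union> {w \<in> verts G. hop_reach G (\<tau> div 2) w v}
                    in (S, {e \<in> edges G. e \<subseteq> S}))"

end

theory Submission
  imports Defs
begin

text \<open>Any two vertices of the ball \<open>\<Omega>(v)\<close> of radius \<open>\<lfloor>\<tau>/2\<rfloor>\<close> are joined by a walk of
  length at most \<open>\<tau>\<close> through its centre that stays inside the ball. Hence, in the subgraph
  formed by the edges of \<open>\<Omega>(v)\<close>, every edge has all other vertices of the ball in its
  higher-order support, so this subgraph is contained in the \<open>(|V(\<Omega>(v))|, \<tau>)\<close>-truss.
  The truss itself is the union of all edge sets with the support property, since supports
  only grow with the edge set.\<close>

lemma relpow_mono: "(R :: ('a \<times> 'a) set) \<subseteq> S \<Longrightarrow> (x, y) \<in> R ^^ n \<Longrightarrow> (x, y) \<in> S ^^ n"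
  by (induction n arbitrary: y) auto

lemma adjrel_relpow_sym: "(x, y) \<in> adjrel E ^^ n \<Longrightarrow> (y, x) \<in> adjrel E ^^ n"
proof (induction n arbitrary: x)
  case 0
  then show ?case by simp
next
  case (Suc n)
  then obtain z where "(x, z) \<in> adjrel E" "(z, y) \<in> adjrel E ^^ n"
    by (blast dest: relpow_Suc_D2)
  then have "(y, z) \<in> adjrel E ^^ n" "(z, x) \<in> adjrel E"
    using Suc.IH by (auto simp: adjrel_def insert_commute)
  then show ?case by (rule relpow_Suc_I)
qed

lemma wf_graph_edge_verts:
  assumes "wf_graph G" "{a, b} \<in> edges G"
  shows "a \<in> verts G" "b \<in> verts G"
  using assms unfolding wf_graph_def by (metis doubleton_eq_iff)+

lemma hop_reach_mono:
  assumes "hop_reach (V, F) \<tau> a b" "F \<subseteq> F'" "\<tau> \<le> \<tau>'"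
  shows "hop_reach (V', F') \<tau>' a b"
proof -
  have "adjrel F \<subseteq> adjrel F'"
    using assms(2) by (auto simp: adjrel_def)
  then show ?thesis
    using assms(1,3) relpow_mono unfolding hop_reach_def edges_def
    by (metis le_trans snd_conv)
qed

lemma hop_reach_sym: "hop_reach H \<tau> a b \<Longrightarrow> hop_reach H \<tau> b a"
  unfolding hop_reach_def by (blast intro: adjrel_relpow_sym)

lemma hop_reach_trans:
  "hop_reach H s a b \<Longrightarrow> hop_reach H t b c \<Longrightarrow> hop_reach H (s + t) a c"
  unfolding hop_reach_def by (blast intro: relpow_trans add_mono)

lemma sup_tau_mono:
  assumes "finite V" "F \<subseteq> F'"
  shows "sup_tau (V, F) \<tau> x y \<le> sup_tau (V, F') \<tau> x y"
proof -
  have "N_tau (V, F) \<tau> z \<subseteq> N_tau (V, F') \<tau> z" for z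
    using hop_reach_mono[OF _ assms(2) order_refl] by (auto simp: N_tau_def verts_def)
  moreover have "finite (N_tau (V, F') \<tau> z)" for z
    using assms(1) by (simp add: N_tau_def verts_def)
  ultimately show ?thesis
    unfolding sup_tau_def by (meson Int_mono card_mono finite_Int)
qed

lemma truss_prop_Union:
  assumes "wf_graph G"
  shows "truss_prop G \<tau> k (\<Union>{F. truss_prop G \<tau> k F})"
  unfolding truss_prop_def[of G \<tau> k "\<Union>{F. truss_prop G \<tau> k F}"]
proof (intro conjI allI impI)
  show "\<Union>{F. truss_prop G \<tau> k F} \<subseteq> edges G"
    by (auto simp: truss_prop_def)
next
  fix x y
  assume "{x, y} \<in> \<Union>{F. truss_prop G \<tau> k F}"
  then obtain F where F: "truss_prop G \<tau> k F" "{x, y} \<in> F" by blast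
  then have "k \<le> sup_tau (verts G, F) \<tau> x y + 2"
    by (simp add: truss_prop_def)
  also have "\<dots> \<le> sup_tau (verts G, \<Union>{F. truss_prop G \<tau> k F}) \<tau> x y + 2"
    using assms F(1) by (intro add_right_mono sup_tau_mono) (auto simp: wf_graph_def)
  finally show "k \<le> sup_tau (verts G, \<Union>{F. truss_prop G \<tau> k F}) \<tau> x y + 2" .
qed

lemma truss_eq_Union:
  assumes "wf_graph G"
  shows "truss G \<tau> k = \<Union>{F. truss_prop G \<tau> k F}"
  unfolding truss_def
proof (rule the_equality)
  show "is_truss G \<tau> k (\<Union>{F. truss_prop G \<tau> k F})"
    using truss_prop_Union[OF assms] by (auto simp: is_truss_def)
next
  fix F
  assume "is_truss G \<tau> k F"
  then show "F = \<Union>{F. truss_prop G \<tau> k F}"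
    using truss_prop_Union[OF assms] unfolding is_truss_def by (metis Union_upper mem_Collect_eq)
qed

lemma truss_prop_subset_truss:
  "wf_graph G \<Longrightarrow> truss_prop G \<tau> k F \<Longrightarrow> F \<subseteq> truss G \<tau> k"
  by (auto simp: truss_eq_Union)

lemma truss_prop_edges: "k \<le> 2 \<Longrightarrow> truss_prop G \<tau> k (edges G)"
  by (simp add: truss_prop_def)

lemma truss_level_le:
  assumes "wf_graph G" "{x, y} \<in> truss G \<tau> k"
  shows "k \<le> card (verts G) + 2"
proof -
  obtain F where "truss_prop G \<tau> k F" "{x, y} \<in> F"
    using assms by (auto simp: truss_eq_Union)
  then have "k \<le> sup_tau (verts G, F) \<tau> x y + 2"
    by (simp add: truss_prop_def)
  moreover have "sup_tau (verts G, F) \<tau> x y \<le> card (verts G)"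
    using assms(1) unfolding sup_tau_def N_tau_def wf_graph_def verts_def
    by (intro card_mono) auto
  ultimately show ?thesis by linarith
qed

lemma le_phi_tau:
  assumes "wf_graph G" "{x, y} \<in> truss G \<tau> k"
  shows "k \<le> phi_tau G \<tau> {x, y}"
proof -
  have "{k. {x, y} \<in> truss G \<tau> k} \<subseteq> {..card (verts G) + 2}"
    using truss_level_le[OF assms(1)] by blast
  then have "finite {k. {x, y} \<in> truss G \<tau> k}"
    by (rule finite_subset) simp
  then show ?thesis
    unfolding phi_tau_def using assms(2) by (simp add: Max_ge)
qed

lemma truss_prop_hop_clique:
  assumes "finite (verts G)" "S \<subseteq> verts G" "F \<subseteq> edges G" "\<forall>e\<in>F. e \<subseteq> S"
    and reach: "\<And>a b. a \<in> S \<Longrightarrow> b \<in> S \<Longrightarrow> hop_reach (verts G, F) \<tau> a b"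
  shows "truss_prop G \<tau> (card S) F"
  unfolding truss_prop_def
proof (intro conjI allI impI)
  show "F \<subseteq> edges G" by (fact assms(3))
next
  fix x y
  assume "{x, y} \<in> F"
  then have "x \<in> S" "y \<in> S" using assms(4) by auto
  then have "S - {x, y} \<subseteq> N_tau (verts G, F) \<tau> x \<inter> N_tau (verts G, F) \<tau> y"
    using assms(2) reach by (auto simp: N_tau_def verts_def)
  then have "card (S - {x, y}) \<le> sup_tau (verts G, F) \<tau> x y"
    unfolding sup_tau_def using assms(1) by (intro card_mono) (auto simp: N_tau_def verts_def)
  moreover have "card S - card {x, y} \<le> card (S - {x, y})"
    by (rule diff_card_le_card_Diff) simp
  moreover have "card {x, y} \<le> 2"
    by (cases "x = y") auto
  ultimately show "card S \<le> sup_tau (verts G, F) \<tau> x y + 2" by linarith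
qed

lemma verts_Omega: "verts (Omega G \<tau> v) = {v} \<union> {w \<in> verts G. hop_reach G (\<tau> div 2) w v}"
  by (simp add: Omega_def Let_def verts_def)

lemma edges_Omega: "edges (Omega G \<tau> v) = {e \<in> edges G. e \<subseteq> verts (Omega G \<tau> v)}"
  by (simp add: Omega_def Let_def verts_def edges_def)

lemma walk_in_Omega:
  assumes "wf_graph G" "(w, v) \<in> adjrel (edges G) ^^ m" "m \<le> \<tau> div 2"
  shows "(w, v) \<in> adjrel (edges (Omega G \<tau> v)) ^^ m"
  using assms(2,3)
proof (induction m arbitrary: w)
  case 0
  then show ?case by simp
next
  case (Suc m)
  then obtain z where "(w, z) \<in> adjrel (edges G)" "(z, v) \<in> adjrel (edges G) ^^ m"
    by (blast dest: relpow_Suc_D2)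
  then have z: "{w, z} \<in> edges G" "(z, v) \<in> adjrel (edges G) ^^ m"
    by (simp_all add: adjrel_def)
  have "hop_reach G (\<tau> div 2) w v"
    using Suc.prems unfolding hop_reach_def by blast
  moreover have "hop_reach G (\<tau> div 2) z v"
    using Suc.prems(2) z(2) unfolding hop_reach_def by (blast intro: Suc_leD)
  ultimately have "{w, z} \<in> edges (Omega G \<tau> v)"
    using z(1) wf_graph_edge_verts[OF assms(1) z(1)] by (simp add: edges_Omega verts_Omega)
  then have "(w, z) \<in> adjrel (edges (Omega G \<tau> v))"
    by (simp add: adjrel_def)
  then show ?case
    using Suc.IH[OF z(2)] Suc.prems(2) by (blast intro: relpow_Suc_I2 Suc_leD)
qed

lemma hop_reach_Omega_centre:
  assumes "wf_graph G" "x \<in> verts (Omega G \<tau> v)"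
  shows "hop_reach (verts G, edges (Omega G \<tau> v)) (\<tau> div 2) x v"
  using assms walk_in_Omega[OF assms(1)]
  by (auto simp: verts_Omega hop_reach_def edges_def)

lemma truss_prop_Omega:
  assumes "wf_graph G" "v \<in> verts G"
  shows "truss_prop G \<tau> (card (verts (Omega G \<tau> v))) (edges (Omega G \<tau> v))"
proof (rule truss_prop_hop_clique)
  show "finite (verts G)" using assms(1) by (simp add: wf_graph_def)
  show "verts (Omega G \<tau> v) \<subseteq> verts G" using assms(2) by (auto simp: verts_Omega)
  show "edges (Omega G \<tau> v) \<subseteq> edges G" "\<forall>e\<in>edges (Omega G \<tau> v). e \<subseteq> verts (Omega G \<tau> v)"
    by (auto simp: edges_Omega)
next
  fix a b
  assume "a \<in> verts (Omega G \<tau> v)" "b \<in> verts (Omega G \<tau> v)"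
  then have "hop_reach (verts G, edges (Omega G \<tau> v)) (\<tau> div 2 + \<tau> div 2) a b"
    using hop_reach_Omega_centre[OF assms(1)] by (blast intro: hop_reach_trans hop_reach_sym)
  then show "hop_reach (verts G, edges (Omega G \<tau> v)) \<tau> a b"
    by (rule hop_reach_mono) auto
qed

theorem lemma4:
  fixes G :: "'a graph" and \<tau> :: nat and u v :: 'a
  assumes "wf_graph G" and "\<tau> \<ge> 1" and "v \<in> verts G" and "{u, v} \<in> edges G"
  shows "card (verts (Omega G \<tau> v)) \<le> phi_tau G \<tau> {u, v}"
proof -
  have "{u, v} \<in> truss G \<tau> (card (verts (Omega G \<tau> v)))"
  proof (cases "\<tau> div 2 = 0")
    case True
    then have "card (verts (Omega G \<tau> v)) = 1"
      by (simp add: verts_Omega hop_reach_def Collect_conv_if)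
    then show ?thesis
      using truss_prop_subset_truss[OF assms(1) truss_prop_edges[of 1]] assms(4) by auto
  next
    case False
    then have "hop_reach G (\<tau> div 2) u v"
      using assms(4) by (auto simp: hop_reach_def adjrel_def intro!: exI[of _ 1])
    then have "{u, v} \<in> edges (Omega G \<tau> v)"
      using assms(4) wf_graph_edge_verts[OF assms(1,4)] by (auto simp: edges_Omega verts_Omega)
    then show ?thesis
      using truss_prop_subset_truss[OF assms(1) truss_prop_Omega[OF assms(1,3)]] by blast
  qed
  then show ?thesis by (rule le_phi_tau[OF assms(1)])
qed

end
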